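(* Even for two teams and nonnegative-value players who all strictly prefer the same team, there may not exist an allocation that is both EF1 and justified envy-free.
   Context: Setting: teams $T=[n]$, players $P=\{p_1,\dots,p_m\}$. Each player $p$ has a complete, transitive weak preference $\succsim_p$ over $T$ (strict part $\succ_p$). Each team $i$ has an additive valuation $v_i$, $v_i(S)=\sum_{p\in S}v_i(p)$; nonnegative-value players means $v_i(p)\ge0$ for all $i,p$. An allocation is an ordered partition $(A_1,\dots,A_n)$ of $P$. $A$ is EF1 if for all distinct $i,j$ there are $X\subseteq A_i$, $Y\subseteq A_j$ with $|X\cup Y|\le1$ and $v_i(A_i\setminus X)\ge v_i(A_j\setminus Y)$. Given $A$, a player $p\in A_i$ has justified envy toward a player $q\in A_j$ if $j\succ_p i$ and $v_j(p)>v_j(q)$. $A$ is justified envy-free (justified EF) if no player has justified envy toward another player. *)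

theory Defs
  imports Main "HOL-Library.Library"
begin

text \<open>Teams are 0..<n (i.e. [n] shifted by one). Players form a finite set P.
  pref p i j means: player p weakly prefers team i to team j.
  v i p is the value of player p for team i; bundles are valued additively.\<close>

definition weak_pref_order :: "nat \<Rightarrow> ('p \<Rightarrow> nat \<Rightarrow> nat \<Rightarrow> bool) \<Rightarrow> 'p set \<Rightarrow> bool" where
  "weak_pref_order n pref P \<longleftrightarrow>
     (\<forall>p\<in>P. (\<forall>i\<in>{0..<n}. \<forall>j\<in>{0..<n}. pref p i j \<or> pref p j i) \<and>
            (\<forall>i\<in>{0..<n}. \<forall>j\<in>{0..<n}. \<forall>k\<in>{0..<n}. pref p i j \<longrightarrow> pref p j k \<longrightarrow> pref p i k))"

definition strict_pref :: "('p \<Rightarrow> nat \<Rightarrow> nat \<Rightarrow> bool) \<Rightarrow> 'p \<Rightarrow> nat \<Rightarrow> nat \<Rightarrow> bool" where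
  "strict_pref pref p i j \<longleftrightarrow> pref p i j \<and> \<not> pref p j i"

definition val :: "(nat \<Rightarrow> 'p \<Rightarrow> real) \<Rightarrow> nat \<Rightarrow> 'p set \<Rightarrow> real" where
  "val v i S = (\<Sum>p\<in>S. v i p)"

definition is_allocation :: "nat \<Rightarrow> 'p set \<Rightarrow> (nat \<Rightarrow> 'p set) \<Rightarrow> bool" where
  "is_allocation n P A \<longleftrightarrow>
     (\<Union>i\<in>{0..<n}. A i) = P \<and>
     (\<forall>i\<in>{0..<n}. \<forall>j\<in>{0..<n}. i \<noteq> j \<longrightarrow> A i \<inter> A j = {})"

definition EF1 :: "nat \<Rightarrow> (nat \<Rightarrow> 'p \<Rightarrow> real) \<Rightarrow> (nat \<Rightarrow> 'p set) \<Rightarrow> bool" where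
  "EF1 n v A \<longleftrightarrow>
     (\<forall>i\<in>{0..<n}. \<forall>j\<in>{0..<n}. i \<noteq> j \<longrightarrow>
        (\<exists>X Y. X \<subseteq> A i \<and> Y \<subseteq> A j \<and> card (X \<union> Y) \<le> 1 \<and> finite (X \<union> Y) \<and>
               val v i (A i - X) \<ge> val v i (A j - Y)))"

definition justified_envy :: "('p \<Rightarrow> nat \<Rightarrow> nat \<Rightarrow> bool) \<Rightarrow> (nat \<Rightarrow> 'p \<Rightarrow> real) \<Rightarrow> 'p \<Rightarrow> nat \<Rightarrow> 'p \<Rightarrow> nat \<Rightarrow> bool" where
  "justified_envy pref v p i q j \<longleftrightarrow> strict_pref pref p j i \<and> v j p > v j q"

definition justified_EF :: "nat \<Rightarrow> ('p \<Rightarrow> nat \<Rightarrow> nat \<Rightarrow> bool) \<Rightarrow> (nat \<Rightarrow> 'p \<Rightarrow> real) \<Rightarrow> (nat \<Rightarrow> 'p set) \<Rightarrow> bool" where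
  "justified_EF n pref v A \<longleftrightarrow>
     (\<forall>i\<in>{0..<n}. \<forall>j\<in>{0..<n}. \<forall>p\<in>A i. \<forall>q\<in>A j. \<not> justified_envy pref v p i q j)"

end

theory Submission
  imports Defs
begin

text \<open>Take four players who all strictly prefer team 0; team 0 values them 13, 12, 11, 10 and
  team 1 values them 1, 1, 0, 0. Justified envy-freeness forces team 0 to receive an initial
  segment of the players in its own ranking, since every player prefers team 0. If team 0 lacks player 1, it holds value at most 13
  against at least 33 held by team 1, so team 0 envies beyond one good. If team 0 has player 1, it
  also has player 0, and team 1, holding nothing it values, envies beyond one good.\<close>

lemma val_mono:
  assumes "finite T" "S \<subseteq> T" "\<forall>p\<in>T - S. 0 \<le> v i p"
  shows "val v i S \<le> val v i T"
  unfolding val_def using assms by (intro sum_mono2) auto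

lemma val_diff_card_le_one_ge:
  assumes "finite A" "Y \<subseteq> A" "card Y \<le> 1" "finite Y" "\<forall>q\<in>Y. v i q \<le> M" "0 \<le> M"
  shows "val v i A - M \<le> val v i (A - Y)"
proof -
  consider "Y = {}" | y where "Y = {y}"
    using assms(3,4) by (metis card_0_eq card_1_singletonE le_Suc_eq One_nat_def le_zero_eq)
  then show ?thesis
  proof cases
    case 1
    then show ?thesis using assms(6) by simp
  next
    case (2 y)
    then have "val v i A = v i y + val v i (A - Y)"
      using assms(1,2) sum.remove[of A y "v i"] by (simp add: val_def)
    then show ?thesis using assms(5) 2 by simp
  qed
qed

lemma EF1_imp_val_ge:
  assumes "EF1 n v A" "i < n" "j < n" "i \<noteq> j"
    and "finite (A i)" "finite (A j)"
    and "\<forall>p\<in>A i. 0 \<le> v i p" "\<forall>q\<in>A j. v i q \<le> M" "0 \<le> M"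
  shows "val v i (A j) - M \<le> val v i (A i)"
proof -
  have "\<exists>X Y. X \<subseteq> A i \<and> Y \<subseteq> A j \<and> card (X \<union> Y) \<le> 1 \<and> finite (X \<union> Y) \<and>
      val v i (A i - X) \<ge> val v i (A j - Y)"
    using assms(1-4) unfolding EF1_def by simp
  then obtain X Y where XY: "X \<subseteq> A i" "Y \<subseteq> A j" "card (X \<union> Y) \<le> 1" "finite (X \<union> Y)"
    and envy: "val v i (A j - Y) \<le> val v i (A i - X)"
    by blast
  have "card Y \<le> 1" "finite Y"
    using XY(3,4) card_mono[of "X \<union> Y" Y] by simp_all
  then have "val v i (A j) - M \<le> val v i (A j - Y)"
    using XY(2) assms(6,8,9) by (intro val_diff_card_le_one_ge) auto
  also have "\<dots> \<le> val v i (A i - X)"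
    by (rule envy)
  also have "\<dots> \<le> val v i (A i)"
    using assms(5,7) by (intro val_mono) auto
  finally show ?thesis .
qed

lemma justified_EF_imp_value_le:
  assumes "justified_EF n pref v A" "i < n" "j < n"
    and "p \<in> A j" "q \<in> A i" "strict_pref pref p i j"
  shows "v i p \<le> v i q"
proof -
  have "\<not> justified_envy pref v p j q i"
    using assms(1-5) unfolding justified_EF_def by simp
  then show ?thesis using assms(6) unfolding justified_envy_def by simp
qed

definition example_value :: "nat \<Rightarrow> nat \<Rightarrow> real" where
  "example_value i p = (if i = 0 then 13 - real p else if p < 2 then 1 else 0)"

lemma example_value_nonneg: "p \<le> 3 \<Longrightarrow> 0 \<le> example_value i p"
  by (simp add: example_value_def)

lemma no_EF1_justified_EF_allocation_example:
  "\<not> (\<exists>A. is_allocation 2 {0, 1, 2, 3} A \<and> EF1 2 example_value A \<and>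
          justified_EF 2 (\<lambda>_ i j. i \<le> j) example_value A)"
proof
  let ?v = example_value
  assume "\<exists>A. is_allocation 2 {0, 1, 2, 3} A \<and> EF1 2 ?v A \<and>
              justified_EF 2 (\<lambda>_ i j. i \<le> j) ?v A"
  then obtain A where alloc: "is_allocation 2 {0, 1, 2, 3} A"
    and ef1: "EF1 2 ?v A" and jef: "justified_EF 2 (\<lambda>_ i j. i \<le> j) ?v A"
    by blast
  have "{0..<2::nat} = {0, 1}" by auto
  then have union: "A 0 \<union> A 1 = {0, 1, 2, 3}" and disjoint: "A 0 \<inter> A 1 = {}"
    using alloc unfolding is_allocation_def by auto
  have finite: "finite (A i)" if "i < 2" for i
  proof -
    have "finite (A 0 \<union> A 1)" using union by simp
    moreover have "i = 0 \<or> i = 1" using that by auto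
    ultimately show ?thesis by auto
  qed
  have nonneg: "0 \<le> ?v i p" if "p \<in> A 0 \<union> A 1" for i p
  proof (rule example_value_nonneg)
    show "p \<le> 3" using that[unfolded union] by auto
  qed
  have ranked: "q \<le> p" if "p \<in> A 1" "q \<in> A 0" for p q
  proof -
    have "?v 0 p \<le> ?v 0 q"
      using justified_EF_imp_value_le[OF jef, of 0 1 p q] that by (simp add: strict_pref_def)
    then show ?thesis by (simp add: example_value_def)
  qed
  have everyone_placed: "p \<in> A 0 \<union> A 1" if "p \<le> 3" for p
    unfolding union using that by auto
  show False
  proof (cases "1 \<in> A 0")
    case True
    then have "0 \<in> A 0"
      using everyone_placed[of 0] ranked[of 0 1] by auto
    have "A 1 \<subseteq> {0, 1, 2, 3}" using union by blast
    then have "A 1 \<subseteq> {2, 3}" using True \<open>0 \<in> A 0\<close> disjoint by blast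
    then have "val ?v 1 (A 1) = 0"
      unfolding val_def by (intro sum.neutral) (auto simp: example_value_def)
    moreover have "val ?v 1 {0, 1} \<le> val ?v 1 (A 0)"
      using True \<open>0 \<in> A 0\<close> finite nonneg by (intro val_mono) auto
    moreover have "val ?v 1 (A 0) - 1 \<le> val ?v 1 (A 1)"
      by (rule EF1_imp_val_ge[OF ef1]) (auto simp: finite nonneg, auto simp: example_value_def)
    ultimately show False by (simp add: val_def example_value_def)
  next
    case False
    then have "1 \<in> A 1" using everyone_placed[of 1] by auto
    have "A 0 \<subseteq> {0}"
    proof
      fix q assume "q \<in> A 0"
      then have "q \<le> 1" "q \<noteq> 1" using ranked[OF \<open>1 \<in> A 1\<close>] False by auto
      then show "q \<in> {0}" by simp
    qed
    have "{1, 2, 3} \<subseteq> A 1"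
      using everyone_placed[of 1] everyone_placed[of 2] everyone_placed[of 3] \<open>A 0 \<subseteq> {0}\<close>
      by auto
    have "val ?v 0 (A 0) \<le> val ?v 0 {0}"
      using \<open>A 0 \<subseteq> {0}\<close> by (intro val_mono) (auto simp: example_value_def)
    moreover have "val ?v 0 {1, 2, 3} \<le> val ?v 0 (A 1)"
      using \<open>{1, 2, 3} \<subseteq> A 1\<close> finite nonneg by (intro val_mono) auto
    moreover have "val ?v 0 (A 1) - 13 \<le> val ?v 0 (A 0)"
      by (rule EF1_imp_val_ge[OF ef1]) (auto simp: finite nonneg, auto simp: example_value_def)
    ultimately show False by (simp add: val_def example_value_def)
  qed
qed

theorem proposition6:
  shows "\<exists>(P :: nat set) pref v.
     finite P \<and> weak_pref_order 2 pref P \<and>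
     (\<forall>i\<in>{0..<2}. \<forall>p\<in>P. v i p \<ge> 0) \<and>
     (\<exists>t\<in>{0..<2}. \<forall>p\<in>P. \<forall>i\<in>{0..<2}. i \<noteq> t \<longrightarrow> strict_pref pref p t i) \<and>
     \<not> (\<exists>A. is_allocation 2 P A \<and> EF1 2 v A \<and> justified_EF 2 pref v A)"
proof (intro exI conjI)
  show "finite {0, 1, 2, 3 :: nat}" by simp
  show "weak_pref_order 2 (\<lambda>_ i j. i \<le> j) {0, 1, 2, 3 :: nat}"
    by (auto simp: weak_pref_order_def)
  show "\<forall>i\<in>{0..<2}. \<forall>p\<in>{0, 1, 2, 3}. 0 \<le> example_value i p"
    by (auto intro: example_value_nonneg)
  show "\<exists>t\<in>{0..<2}. \<forall>p\<in>{0, 1, 2, 3 :: nat}. \<forall>i\<in>{0..<2}. i \<noteq> t \<longrightarrow>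
          strict_pref (\<lambda>_ i j. i \<le> j) p t i"
    by (rule bexI[of _ 0]) (auto simp: strict_pref_def)
  show "\<not> (\<exists>A. is_allocation 2 {0, 1, 2, 3} A \<and> EF1 2 example_value A \<and>
           justified_EF 2 (\<lambda>_ i j. i \<le> j) example_value A)"
    by (rule no_EF1_justified_EF_allocation_example)
qed

end
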